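(* Let $a<b$ be real numbers, let $m \ge 1$, and let $F:\mathbb{R}^m \to \mathbb{R}$ be continuous. Suppose that for every choice of subintervals $I_1,\dots,I_m \subset [a,b]$, all closed of a common positive length, such that any two of them are either identical or disjoint, we have \[ F(I_1,\dots,I_m) = F(\ddot I_1,\dots,\ddot I_m). \] Then $F(C_{a,b}^m) = F([a,b]^m)$.
   Context: For a closed interval $I=[c,c+3t]$ with $t>0$, write $\ddot I = [c,c+t]\cup[c+2t,c+3t]$ (the interval with its open middle third removed). For sets $A_1,\dots,A_m\subset\mathbb{R}$, $F(A_1,\dots,A_m)=\{F(x_1,\dots,x_m): x_i\in A_i\}$, and $F(A^m)=F(A,\dots,A)$. The Cantor set is $C=\{\sum_{k\ge1}\alpha_k3^{-k}:\alpha_k\in\{0,2\}\}$, and $C_{a,b} := a + (b-a)C = \{a+(b-a)x : x\in C\}$. *)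

theory Defs
  imports "HOL-Analysis.Analysis"
begin

text \<open>Middle-third removal: for I = [c, c+3t], ddot I = [c,c+t] \<union> [c+2t,c+3t].\<close>
definition ddot :: "real \<Rightarrow> real \<Rightarrow> real set" where
  "ddot c t = {c..c+t} \<union> {c+2*t..c+3*t}"

text \<open>The Cantor set: sums of alpha_k 3^(-k), k \<ge> 1, alpha_k \<in> {0,2} (index shifted to start at 0).\<close>
definition cantor_set :: "real set" where
  "cantor_set = {(\<Sum>k. \<alpha> k / 3 ^ (k+1)) | \<alpha>. \<forall>k. \<alpha> k \<in> {0,2}}"

definition cantor_ab :: "real \<Rightarrow> real \<Rightarrow> real set" where
  "cantor_ab a b = (\<lambda>x. a + (b - a) * x) ` cantor_set"

end

theory Submission
  imports Defs
begin

text \<open>Given y = F(x) with x in [a,b]^m, apply the hypothesis to the triadic subintervals of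
[a,b] of length (b - a)/3^n that currently contain the coordinates of a preimage of y: a new
preimage lies in their outer thirds, so each coordinate descends into a triadic subinterval of
the next level with ternary digit 0 or 2. Coordinates whose intervals agree stay together, and
different ones stay at least one interval apart, so the hypothesis keeps applying. The nested
boxes shrink to a point z of (C_{a,b})^m, and continuity of F gives F(z) = y.\<close>

lemma ternary_geometric_tail_sums: "(\<lambda>k. 2 / 3 ^ (k + n + 1) :: real) sums (1 / 3 ^ n)"
proof -
  have "(\<lambda>k. (1/3::real) ^ k) sums (3/2)"
    using geometric_sums[of "1/3::real"] by simp
  then have "(\<lambda>k. (2 / 3 ^ (n+1)) * (1/3::real) ^ k) sums ((2 / 3 ^ (n+1)) * (3/2))"
    by (rule sums_mult)
  moreover have "(\<lambda>k. (2 / 3 ^ (n+1)) * (1/3::real) ^ k) = (\<lambda>k. 2 / 3 ^ (k + n + 1))"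
    by (simp add: power_add power_one_over field_simps)
  ultimately show ?thesis
    by simp
qed

lemma ternary_expansion_bounds:
  fixes \<alpha> :: "nat \<Rightarrow> real"
  assumes digits: "\<And>k. 0 \<le> \<alpha> k \<and> \<alpha> k \<le> 2"
  shows "summable (\<lambda>k. \<alpha> k / 3 ^ (k+1))"
    and "(\<Sum>k<n. \<alpha> k / 3 ^ (k+1)) \<le> (\<Sum>k. \<alpha> k / 3 ^ (k+1))"
    and "(\<Sum>k. \<alpha> k / 3 ^ (k+1)) \<le> (\<Sum>k<n. \<alpha> k / 3 ^ (k+1)) + 1 / 3 ^ n"
proof -
  have le: "\<alpha> k / 3 ^ (k+1) \<le> 2 / 3 ^ (k+1)" for k
    using digits[of k] by (simp add: divide_right_mono)
  have norm_le: "norm (\<alpha> k / 3 ^ (k+1)) \<le> 2 / 3 ^ (k+1)" for k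
    using digits[of k] by (simp add: divide_right_mono)
  have nonneg: "0 \<le> \<alpha> k / 3 ^ (k+1)" for k
    using digits[of k] by simp
  have geo: "summable (\<lambda>k. 2 / 3 ^ (k + 0 + 1) :: real)"
    using ternary_geometric_tail_sums by (rule sums_summable)
  show sm: "summable (\<lambda>k. \<alpha> k / 3 ^ (k+1))"
    by (rule summable_comparison_test[OF _ geo]) (use norm_le in auto)
  have split: "(\<Sum>k. \<alpha> k / 3 ^ (k+1)) = (\<Sum>k. \<alpha> (k+n) / 3 ^ (k+n+1)) + (\<Sum>k<n. \<alpha> k / 3 ^ (k+1))"
    using suminf_split_initial_segment[OF sm, of n] by simp
  have tail_sm: "summable (\<lambda>k. \<alpha> (k+n) / 3 ^ (k+n+1))"
    using summable_ignore_initial_segment[OF sm, of n] by simp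
  have "0 \<le> (\<Sum>k. \<alpha> (k+n) / 3 ^ (k+n+1))"
    by (rule suminf_nonneg[OF tail_sm]) (rule nonneg)
  then show "(\<Sum>k<n. \<alpha> k / 3 ^ (k+1)) \<le> (\<Sum>k. \<alpha> k / 3 ^ (k+1))"
    using split by simp
  have "(\<Sum>k. \<alpha> (k+n) / 3 ^ (k+n+1)) \<le> (\<Sum>k. 2 / 3 ^ (k+n+1))"
    by (rule suminf_le[OF _ tail_sm sums_summable[OF ternary_geometric_tail_sums]]) (rule le)
  also have "\<dots> = 1 / 3 ^ n"
    using ternary_geometric_tail_sums sums_unique by metis
  finally show "(\<Sum>k. \<alpha> k / 3 ^ (k+1)) \<le> (\<Sum>k<n. \<alpha> k / 3 ^ (k+1)) + 1 / 3 ^ n"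
    using split by simp
qed

lemma cantor_set_subset: "cantor_set \<subseteq> {0..1}"
proof
  fix x assume "x \<in> cantor_set"
  then obtain \<alpha> where x: "x = (\<Sum>k. \<alpha> k / 3 ^ (k+1))" and \<alpha>: "\<forall>k. \<alpha> k \<in> {0,2}"
    unfolding cantor_set_def by blast
  have "0 \<le> \<alpha> k \<and> \<alpha> k \<le> 2" for k
    using \<alpha>[rule_format, of k] by auto
  from ternary_expansion_bounds(2,3)[of \<alpha> 0, OF this] show "x \<in> {0..1}"
    by (simp add: x)
qed

lemma cantor_ab_subset:
  assumes "a \<le> b"
  shows "cantor_ab a b \<subseteq> {a..b}"
proof
  fix u assume "u \<in> cantor_ab a b"
  then obtain x where u: "u = a + (b - a) * x" and "x \<in> {0..1}"
    using cantor_set_subset unfolding cantor_ab_def by blast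
  then have "0 \<le> (b - a) * x" and "(b - a) * x \<le> b - a"
    using assms by (auto simp: mult_left_le)
  then show "u \<in> {a..b}"
    by (simp add: u)
qed

text \<open>The k-th triadic subinterval of [a,b] at level n is written [c, c + 3t] with
c = tri_corner a b n k and t = tri_third a b n, matching the shape of the hypothesis.\<close>

definition tri_corner :: "real \<Rightarrow> real \<Rightarrow> nat \<Rightarrow> nat \<Rightarrow> real" where
  "tri_corner a b n k = a + (b - a) * real k / 3 ^ n"

definition tri_third :: "real \<Rightarrow> real \<Rightarrow> nat \<Rightarrow> real" where
  "tri_third a b n = (b - a) / 3 ^ (n + 1)"

lemma tri_corner_next:
  "tri_corner a b (Suc n) (3 * k + d) = tri_corner a b n k + real d * tri_third a b n"
  by (simp add: tri_corner_def tri_third_def field_simps)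

lemma tri_third_next: "3 * tri_third a b (Suc n) = tri_third a b n"
  by (simp add: tri_third_def field_simps)

lemma tri_corner_Suc: "tri_corner a b n k + 3 * tri_third a b n = tri_corner a b n (Suc k)"
  by (simp add: tri_corner_def tri_third_def field_simps)

lemma tri_interval_length: "3 * tri_third a b n = (b - a) / 3 ^ n"
  by (simp add: tri_third_def field_simps)

lemma tri_corner_mono:
  assumes "a \<le> b" and "k \<le> l"
  shows "tri_corner a b n k \<le> tri_corner a b n l"
  using assms by (simp add: tri_corner_def divide_right_mono mult_left_mono)

lemma tri_corner_strict_mono:
  assumes "a < b" and "k < l"
  shows "tri_corner a b n k < tri_corner a b n l"
  using assms by (simp add: tri_corner_def divide_strict_right_mono)

lemma tri_interval_within:
  assumes "a \<le> b" and "k < 3 ^ n"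
  shows "a \<le> tri_corner a b n k \<and> tri_corner a b n k + 3 * tri_third a b n \<le> b"
proof
  show "a \<le> tri_corner a b n k"
    using tri_corner_mono[OF assms(1), of 0 k n] by (simp add: tri_corner_def)
  have "tri_corner a b n (Suc k) \<le> tri_corner a b n (3 ^ n)"
    using assms by (intro tri_corner_mono) auto
  moreover have "tri_corner a b n (3 ^ n) = b"
    by (simp add: tri_corner_def)
  ultimately show "tri_corner a b n k + 3 * tri_third a b n \<le> b"
    by (simp add: tri_corner_Suc)
qed

text \<open>Gap at least 2, since closed triadic intervals with adjacent indices share an endpoint.\<close>

definition separated_indices :: "('i \<Rightarrow> nat) \<Rightarrow> bool" where
  "separated_indices N \<longleftrightarrow> (\<forall>i j. N i \<noteq> N j \<longrightarrow> N i + 2 \<le> N j \<or> N j + 2 \<le> N i)"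

lemma separated_indices_next:
  assumes "separated_indices N" and "\<forall>i. d i \<in> {0,2::nat}"
  shows "separated_indices (\<lambda>i. 3 * N i + d i)"
  unfolding separated_indices_def
proof (intro allI impI)
  fix i j
  assume "3 * N i + d i \<noteq> 3 * N j + d j"
  moreover have "d i \<in> {0,2}" and "d j \<in> {0,2}"
    using assms(2) by auto
  moreover have "N i \<noteq> N j \<longrightarrow> N i + 2 \<le> N j \<or> N j + 2 \<le> N i"
    using assms(1) unfolding separated_indices_def by blast
  ultimately show "3 * N i + d i + 2 \<le> 3 * N j + d j \<or> 3 * N j + d j + 2 \<le> 3 * N i + d i"
    by auto
qed

lemma tri_intervals_same_or_disjoint:
  assumes "a < b" and "separated_indices N"
  shows "{tri_corner a b n (N i) .. tri_corner a b n (N i) + 3 * tri_third a b n}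
           = {tri_corner a b n (N j) .. tri_corner a b n (N j) + 3 * tri_third a b n}
       \<or> {tri_corner a b n (N i) .. tri_corner a b n (N i) + 3 * tri_third a b n}
           \<inter> {tri_corner a b n (N j) .. tri_corner a b n (N j) + 3 * tri_third a b n} = {}"
proof -
  have gap: "tri_corner a b n k + 3 * tri_third a b n < tri_corner a b n l" if "k + 2 \<le> l" for k l
    using tri_corner_strict_mono[OF assms(1), of "Suc k" l n] that by (simp add: tri_corner_Suc)
  show ?thesis
  proof (cases "N i = N j")
    case False
    then have "N i + 2 \<le> N j \<or> N j + 2 \<le> N i"
      using assms(2) unfolding separated_indices_def by blast
    then show ?thesis
      using gap[of "N i" "N j"] gap[of "N j" "N i"] by auto
  qed simp
qed

definition tri_box :: "real \<Rightarrow> real \<Rightarrow> nat \<Rightarrow> ('m \<Rightarrow> nat) \<Rightarrow> (real ^ 'm) set" where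
  "tri_box a b n N =
     {x. \<forall>i. x $ i \<in> {tri_corner a b n (N i) .. tri_corner a b n (N i) + 3 * tri_third a b n}}"

definition middle_thirds_invariant :: "(real ^ 'm \<Rightarrow> real) \<Rightarrow> real \<Rightarrow> real \<Rightarrow> bool" where
  "middle_thirds_invariant F a b \<longleftrightarrow>
     (\<forall>(c :: 'm \<Rightarrow> real) t. t > 0 \<longrightarrow> (\<forall>i. a \<le> c i \<and> c i + 3 * t \<le> b) \<longrightarrow>
        (\<forall>i j. {c i..c i + 3 * t} = {c j..c j + 3 * t}
               \<or> {c i..c i + 3 * t} \<inter> {c j..c j + 3 * t} = {}) \<longrightarrow>
        F ` {x. \<forall>i. x $ i \<in> {c i..c i + 3 * t}} = F ` {x. \<forall>i. x $ i \<in> ddot (c i) t})"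

lemma tri_box_0: "tri_box a b 0 (\<lambda>_. 0) = {x. \<forall>i. x $ i \<in> {a..b}}"
proof -
  have "3 * tri_third a b 0 = b - a"
    by (simp add: tri_third_def)
  then show ?thesis
    by (simp add: tri_box_def tri_corner_def)
qed

lemma tri_box_refine:
  assumes inv: "middle_thirds_invariant F a b" and "a < b"
    and bound: "\<forall>i. N i < 3 ^ n" and sep: "separated_indices N"
    and y: "y \<in> F ` tri_box a b n N"
  shows "\<exists>d. (\<forall>i. d i \<in> {0,2::nat}) \<and> y \<in> F ` tri_box a b (Suc n) (\<lambda>i. 3 * N i + d i)"
proof -
  define c where "c i = tri_corner a b n (N i)" for i
  define t where "t = tri_third a b n"
  have "t > 0"
    using \<open>a < b\<close> by (simp add: t_def tri_third_def)
  moreover have "\<forall>i. a \<le> c i \<and> c i + 3 * t \<le> b"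
    using tri_interval_within \<open>a < b\<close> bound by (simp add: c_def t_def)
  moreover have "\<forall>i j. {c i..c i + 3 * t} = {c j..c j + 3 * t}
                     \<or> {c i..c i + 3 * t} \<inter> {c j..c j + 3 * t} = {}"
    using tri_intervals_same_or_disjoint[OF \<open>a < b\<close> sep] by (simp add: c_def t_def)
  ultimately have "F ` {x. \<forall>i. x $ i \<in> {c i..c i + 3 * t}} = F ` {x. \<forall>i. x $ i \<in> ddot (c i) t}"
    using inv[unfolded middle_thirds_invariant_def, rule_format, of t c] by blast
  moreover have "tri_box a b n N = {x. \<forall>i. x $ i \<in> {c i..c i + 3 * t}}"
    by (simp add: tri_box_def c_def t_def)
  ultimately have "F ` tri_box a b n N = F ` {x. \<forall>i. x $ i \<in> ddot (c i) t}"
    by simp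
  with y obtain x where x: "\<forall>i. x $ i \<in> ddot (c i) t" and yx: "y = F x"
    by auto
  define d where "d i = (if x $ i \<le> c i + t then 0 else 2::nat)" for i
  have "x \<in> tri_box a b (Suc n) (\<lambda>i. 3 * N i + d i)"
    using x \<open>t > 0\<close>
    by (auto simp: tri_box_def tri_corner_next tri_third_next ddot_def d_def
        simp flip: c_def t_def)
  then show ?thesis
    using yx by (intro exI[of _ d]) (auto simp: d_def)
qed

lemma nested_tri_boxes:
  assumes inv: "middle_thirds_invariant F a b" and "a < b"
    and y: "y \<in> F ` {x. \<forall>i. x $ i \<in> {a..b}}"
  obtains N d where "N 0 = (\<lambda>_. 0)" and "\<forall>n i. d n i \<in> {0,2::nat}"
    and "\<forall>n. N (Suc n) = (\<lambda>i. 3 * N n i + d n i)"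
    and "\<forall>n. y \<in> F ` tri_box a b n (N n)"
proof -
  define P where "P n N \<longleftrightarrow>
    (\<forall>i. N i < 3 ^ n) \<and> separated_indices N \<and> y \<in> F ` tri_box a b n N" for n N
  define Q where "Q N N' \<longleftrightarrow> (\<exists>d. (\<forall>i. d i \<in> {0,2::nat}) \<and> N' = (\<lambda>i. 3 * N i + d i))"
    for N N' :: "'a \<Rightarrow> nat"
  have "P 0 (\<lambda>_. 0)"
    using y by (simp add: P_def separated_indices_def tri_box_0)
  moreover have "\<exists>N'. P (Suc n) N' \<and> Q N N'" if "P n N" for n N
  proof -
    have bound: "\<forall>i. N i < 3 ^ n" and sep: "separated_indices N"
      and "y \<in> F ` tri_box a b n N"
      using \<open>P n N\<close> unfolding P_def by blast+
    then obtain d where d: "\<forall>i. d i \<in> {0,2::nat}"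
      and y': "y \<in> F ` tri_box a b (Suc n) (\<lambda>i. 3 * N i + d i)"
      using tri_box_refine[OF inv \<open>a < b\<close>] by blast
    have "3 * N i + d i < 3 ^ Suc n" for i
    proof -
      have "N i < 3 ^ n" and "d i \<le> 2"
        using bound d[rule_format, of i] by auto
      then show ?thesis
        by simp
    qed
    then have "P (Suc n) (\<lambda>i. 3 * N i + d i)"
      using separated_indices_next[OF sep d] y' unfolding P_def by blast
    moreover have "Q N (\<lambda>i. 3 * N i + d i)"
      using d unfolding Q_def by blast
    ultimately show ?thesis
      by blast
  qed
  ultimately obtain Ns where Ns: "\<And>n. P n (Ns n)" and Q: "\<And>n. Q (Ns n) (Ns (Suc n))"
    using dependent_nat_choice[of P "\<lambda>_. Q"] by blast
  have step: "Ns (Suc n) i - 3 * Ns n i \<in> {0,2} \<and>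
      Ns (Suc n) i = 3 * Ns n i + (Ns (Suc n) i - 3 * Ns n i)" for n i
    using Q[of n] unfolding Q_def by auto
  show thesis
  proof
    have "\<forall>i. Ns 0 i < 3 ^ 0"
      using Ns[of 0] unfolding P_def by blast
    then show "Ns 0 = (\<lambda>_. 0)"
      by auto
    show "\<forall>n i. Ns (Suc n) i - 3 * Ns n i \<in> {0,2}"
      using step by blast
    show "\<forall>n. Ns (Suc n) = (\<lambda>i. 3 * Ns n i + (Ns (Suc n) i - 3 * Ns n i))"
      using step by (metis (no_types, lifting))
    show "\<forall>n. y \<in> F ` tri_box a b n (Ns n)"
      using Ns unfolding P_def by blast
  qed
qed

lemma digit_recurrence_sum:
  fixes N d :: "nat \<Rightarrow> nat"
  assumes "N 0 = 0" and "\<And>n. N (Suc n) = 3 * N n + d n"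
  shows "real (N n) / 3 ^ n = (\<Sum>k<n. real (d k) / 3 ^ (k+1))"
proof (induction n)
  case (Suc n)
  have "real (N (Suc n)) / 3 ^ Suc n = real (N n) / 3 ^ n + real (d n) / 3 ^ (n+1)"
    by (simp add: assms(2) field_simps)
  then show ?case
    using Suc by simp
qed (simp add: assms(1))

lemma digit_point_in_tri_box:
  assumes "a \<le> b" and "N 0 = (\<lambda>_. 0)" and digits: "\<forall>n i. d n i \<le> 2"
    and "\<forall>n. N (Suc n) = (\<lambda>i. 3 * N n i + d n i)"
  shows "(\<chi> i. a + (b - a) * (\<Sum>k. real (d k i) / 3 ^ (k+1))) \<in> tri_box a b n (N n)"
  unfolding tri_box_def
proof (intro CollectI allI)
  fix i
  define s where "s = (\<Sum>k. real (d k i) / 3 ^ (k+1))"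
  define p where "p = (\<Sum>k<n. real (d k i) / 3 ^ (k+1))"
  have "0 \<le> real (d k i) \<and> real (d k i) \<le> 2" for k
    using digits[rule_format, of k i] by auto
  from ternary_expansion_bounds(2,3)[of _ n, OF this]
  have "p \<le> s" and "s \<le> p + 1 / 3 ^ n"
    by (simp_all add: s_def p_def)
  then have "(b - a) * p \<le> (b - a) * s" and "(b - a) * s \<le> (b - a) * (p + 1 / 3 ^ n)"
    using \<open>a \<le> b\<close> by (simp_all add: mult_left_mono)
  moreover have "real (N n i) / 3 ^ n = p"
    using digit_recurrence_sum[of "\<lambda>n. N n i" "\<lambda>k. d k i" n] assms(2,4)
    by (simp add: p_def)
  then have "tri_corner a b n (N n i) = a + (b - a) * p"
    by (simp add: tri_corner_def flip: \<open>real (N n i) / 3 ^ n = p\<close>)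
  ultimately show "(\<chi> i. a + (b - a) * (\<Sum>k. real (d k i) / 3 ^ (k+1))) $ i
      \<in> {tri_corner a b n (N n i)..tri_corner a b n (N n i) + 3 * tri_third a b n}"
    by (simp add: s_def tri_interval_length distrib_left)
qed

lemma tri_box_norm_diff:
  fixes x z :: "real ^ 'm"
  assumes "x \<in> tri_box a b n N" and "z \<in> tri_box a b n N"
  shows "norm (x - z) \<le> real CARD('m) * (3 * tri_third a b n)"
proof -
  have "\<bar>(x - z) $ i\<bar> \<le> 3 * tri_third a b n" for i
  proof -
    have "x $ i \<in> {tri_corner a b n (N i) .. tri_corner a b n (N i) + 3 * tri_third a b n}"
      and "z $ i \<in> {tri_corner a b n (N i) .. tri_corner a b n (N i) + 3 * tri_third a b n}"
      using assms unfolding tri_box_def by blast+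
    then show ?thesis
      unfolding vector_minus_component abs_le_iff atLeastAtMost_iff by linarith
  qed
  then have "(\<Sum>i\<in>UNIV. \<bar>(x - z) $ i\<bar>) \<le> real CARD('m) * (3 * tri_third a b n)"
    using sum_mono[of UNIV "\<lambda>i. \<bar>(x - z) $ i\<bar>" "\<lambda>_. 3 * tri_third a b n"] by simp
  then show ?thesis
    using norm_le_l1_cart[of "x - z"] by linarith
qed

lemma tri_boxes_converge:
  fixes xs :: "nat \<Rightarrow> real ^ 'm"
  assumes "\<forall>n. xs n \<in> tri_box a b n (N n)" and "\<forall>n. z \<in> tri_box a b n (N n)"
  shows "xs \<longlonglongrightarrow> z"
proof -
  have "(\<lambda>n. real CARD('m) * (3 * tri_third a b n)) \<longlonglongrightarrow> 0"
    unfolding tri_interval_length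
    by (intro tendsto_mult_right_zero LIMSEQ_divide_realpow_zero) simp
  moreover have "\<forall>\<^sub>F n in sequentially. norm (xs n - z) \<le> real CARD('m) * (3 * tri_third a b n)"
    using assms by (intro always_eventually allI tri_box_norm_diff) blast+
  ultimately have "(\<lambda>n. xs n - z) \<longlonglongrightarrow> 0"
    by (rule Lim_null_comparison[rotated])
  then show ?thesis
    by (rule LIM_zero_cancel)
qed

lemma cantor_point_in_nested_tri_boxes:
  assumes "a \<le> b" and "N 0 = (\<lambda>_. 0)" and digits: "\<forall>n i. d n i \<in> {0,2::nat}"
    and "\<forall>n. N (Suc n) = (\<lambda>i. 3 * N n i + d n i)"
  obtains z where "\<forall>i. z $ i \<in> cantor_ab a b" and "\<forall>n. z \<in> tri_box a b n (N n)"
proof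
  define z :: "real ^ 'a" where "z = (\<chi> i. a + (b - a) * (\<Sum>k. real (d k i) / 3 ^ (k+1)))"
  have "\<forall>n i. d n i \<le> 2"
    using digits by (metis empty_iff insert_iff order_refl zero_le)
  then show "\<forall>n. z \<in> tri_box a b n (N n)"
    using digit_point_in_tri_box assms unfolding z_def by blast
  have "(\<Sum>k. real (d k i) / 3 ^ (k+1)) \<in> cantor_set" for i
    unfolding cantor_set_def using digits by (intro CollectI exI[of _ "\<lambda>k. real (d k i)"]) auto
  then have "z $ i \<in> cantor_ab a b" for i
    unfolding z_def cantor_ab_def by (simp only: vec_lambda_beta) (rule imageI)
  then show "\<forall>i. z $ i \<in> cantor_ab a b"
    by blast
qed

theorem lemma2p2:
  fixes F :: "real ^ 'm \<Rightarrow> real" and a b :: real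
  assumes "a < b"
    and "continuous_on UNIV F"
    and "\<And>(c :: 'm \<Rightarrow> real) (t :: real).
           t > 0 \<Longrightarrow> (\<forall>i. a \<le> c i \<and> c i + 3 * t \<le> b) \<Longrightarrow>
           (\<forall>i j. {c i..c i + 3 * t} = {c j..c j + 3 * t}
                  \<or> {c i..c i + 3 * t} \<inter> {c j..c j + 3 * t} = {}) \<Longrightarrow>
           F ` {x. \<forall>i. x $ i \<in> {c i..c i + 3 * t}} = F ` {x. \<forall>i. x $ i \<in> ddot (c i) t}"
  shows "F ` {x. \<forall>i. x $ i \<in> cantor_ab a b} = F ` {x. \<forall>i. x $ i \<in> {a..b}}"
proof
  have "{x. \<forall>i. x $ i \<in> cantor_ab a b} \<subseteq> {x. \<forall>i. x $ i \<in> {a..b}}"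
    using cantor_ab_subset[of a b] \<open>a < b\<close> by auto
  then show "F ` {x. \<forall>i. x $ i \<in> cantor_ab a b} \<subseteq> F ` {x. \<forall>i. x $ i \<in> {a..b}}"
    by (rule image_mono)
  have inv: "middle_thirds_invariant F a b"
    using assms(3) unfolding middle_thirds_invariant_def by blast
  show "F ` {x. \<forall>i. x $ i \<in> {a..b}} \<subseteq> F ` {x. \<forall>i. x $ i \<in> cantor_ab a b}"
  proof
    fix y assume "y \<in> F ` {x. \<forall>i. x $ i \<in> {a..b}}"
    from nested_tri_boxes[OF inv \<open>a < b\<close> this] obtain N d where
      N: "N 0 = (\<lambda>_. 0)" "\<forall>n i. d n i \<in> {0,2::nat}" "\<forall>n. N (Suc n) = (\<lambda>i. 3 * N n i + d n i)"
      and y: "\<forall>n. y \<in> F ` tri_box a b n (N n)" .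
    obtain z where z_cantor: "\<forall>i. z $ i \<in> cantor_ab a b" and z: "\<forall>n. z \<in> tri_box a b n (N n)"
      using cantor_point_in_nested_tri_boxes[OF less_imp_le[OF \<open>a < b\<close>] N] .
    have "\<exists>x. x \<in> tri_box a b n (N n) \<and> F x = y" for n
      using y by blast
    then obtain xs where xs: "\<forall>n. xs n \<in> tri_box a b n (N n)" and Fxs: "\<And>n. F (xs n) = y"
      by metis
    from xs z have "xs \<longlonglongrightarrow> z"
      by (rule tri_boxes_converge)
    moreover have "isCont F z"
      using assms(2) by (simp add: continuous_on_eq_continuous_at)
    ultimately have "(\<lambda>n. F (xs n)) \<longlonglongrightarrow> F z"
      by (rule isCont_tendsto_compose[rotated])
    then have "F z = y"
      unfolding Fxs by (rule LIMSEQ_unique[OF _ tendsto_const])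
    with z_cantor show "y \<in> F ` {x. \<forall>i. x $ i \<in> cantor_ab a b}"
      by blast
  qed
qed

end
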